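(* Let $X$ be an exponential vector space over a field $K$. Then $X\smallsetminus X_0$ has a basis if and only if the feasible set $Q(X)$ generates $X\smallsetminus X_0$.
   Context: An exponential vector space (evs) over a field $K$ is a partially ordered set $(X,\leq)$ with a binary operation $+$ on $X$ and a map $K\times X\to X$, $(\alpha,x)\mapsto \alpha x$, such that: (A1) $(X,+)$ is a commutative semigroup with identity $\theta$; (A2) $x\leq y$ implies $x+z\leq y+z$ and $\alpha x\leq \alpha y$ for all $z\in X$, $\alpha\in K$; (A3) $\alpha(x+y)=\alpha x+\alpha y$, $\alpha(\beta x)=(\alpha\beta)x$, $(\alpha+\beta)x\leq \alpha x+\beta x$, $1x=x$; (A4) $\alpha x=\theta$ iff $\alpha=0$ or $x=\theta$; (A5) $x+(-1)x=\theta$ iff $x\in X_0$, where $X_0:=\{z\in X: y\not\leq z \text{ for all } y\in X\smallsetminus\{z\}\}$ (the set of minimal elements, called the primitive space; it is a vector space over $K$); (A6) for each $x\in X$ there is $p\in X_0$ with $p\leq x$. For $x\in X\smallsetminus X_0$ let $L(x):=\{z\in X: z\geq \alpha x+p \text{ for some } \alpha\in K\smallsetminus\{0\},\ p\in X_0\}$. A subset $B\subseteq X\smallsetminus X_0$ generates $X\smallsetminus X_0$ if $X\smallsetminus X_0=\bigcup_{b\in B}L(b)$. Elements $x,y\in X\smallsetminus X_0$ are orderly dependent if $x\in L(y)$ or $y\in L(x)$, and orderly independent otherwise; $B\subseteq X\smallsetminus X_0$ is orderly independent if any two distinct members of $B$ are orderly independent. A basis of $X\smallsetminus X_0$ is an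 orderly independent subset of $X\smallsetminus X_0$ that generates $X\smallsetminus X_0$. For $x\in X$ write $\downarrow x:=\{z\in X: z\leq x\}$. The feasible set is $Q(X):=\{x\in X\smallsetminus X_0: (\downarrow x\smallsetminus X_0)\subseteq L(x)\}$. *)

theory Defs
  imports Main
begin

definition primitive :: "('x \<Rightarrow> 'x \<Rightarrow> bool) \<Rightarrow> 'x set" where
  "primitive le = {z. \<forall>y. y \<noteq> z \<longrightarrow> \<not> le y z}"

definition evs :: "('x \<Rightarrow> 'x \<Rightarrow> bool) \<Rightarrow> ('x \<Rightarrow> 'x \<Rightarrow> 'x) \<Rightarrow> 'x
    \<Rightarrow> ('k::field \<Rightarrow> 'x \<Rightarrow> 'x) \<Rightarrow> bool" where
  "evs le add th sm \<longleftrightarrow>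
     (\<forall>x. le x x) \<and> (\<forall>x y. le x y \<and> le y x \<longrightarrow> x = y) \<and>
     (\<forall>x y z. le x y \<and> le y z \<longrightarrow> le x z) \<and>
     (\<forall>x y z. add (add x y) z = add x (add y z)) \<and>
     (\<forall>x y. add x y = add y x) \<and>
     (\<forall>x. add x th = x) \<and>
     (\<forall>x y z a. le x y \<longrightarrow> le (add x z) (add y z) \<and> le (sm a x) (sm a y)) \<and>
     (\<forall>a x y. sm a (add x y) = add (sm a x) (sm a y)) \<and>
     (\<forall>a b x. sm a (sm b x) = sm (a * b) x) \<and>
     (\<forall>a b x. le (sm (a + b) x) (add (sm a x) (sm b x))) \<and>
     (\<forall>x. sm 1 x = x) \<and>
     (\<forall>a x. sm a x = th \<longleftrightarrow> a = 0 \<or> x = th) \<and>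
     (\<forall>x. add x (sm (-1) x) = th \<longleftrightarrow> x \<in> primitive le) \<and>
     (\<forall>x. \<exists>p\<in>primitive le. le p x)"

definition Lset :: "('x \<Rightarrow> 'x \<Rightarrow> bool) \<Rightarrow> ('x \<Rightarrow> 'x \<Rightarrow> 'x)
    \<Rightarrow> ('k::field \<Rightarrow> 'x \<Rightarrow> 'x) \<Rightarrow> 'x \<Rightarrow> 'x set" where
  "Lset le add sm x = {z. \<exists>a p. a \<noteq> 0 \<and> p \<in> primitive le \<and> le (add (sm a x) p) z}"

definition generates :: "('x \<Rightarrow> 'x \<Rightarrow> bool) \<Rightarrow> ('x \<Rightarrow> 'x \<Rightarrow> 'x)
    \<Rightarrow> ('k::field \<Rightarrow> 'x \<Rightarrow> 'x) \<Rightarrow> 'x set \<Rightarrow> bool" where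
  "generates le add sm B \<longleftrightarrow> B \<subseteq> - primitive le \<and>
     - primitive le = (\<Union>b\<in>B. Lset le add sm b)"

definition orderly_independent :: "('x \<Rightarrow> 'x \<Rightarrow> bool) \<Rightarrow> ('x \<Rightarrow> 'x \<Rightarrow> 'x)
    \<Rightarrow> ('k::field \<Rightarrow> 'x \<Rightarrow> 'x) \<Rightarrow> 'x set \<Rightarrow> bool" where
  "orderly_independent le add sm B \<longleftrightarrow> B \<subseteq> - primitive le \<and>
     (\<forall>x\<in>B. \<forall>y\<in>B. x \<noteq> y \<longrightarrow> x \<notin> Lset le add sm y \<and> y \<notin> Lset le add sm x)"

definition is_basis :: "('x \<Rightarrow> 'x \<Rightarrow> bool) \<Rightarrow> ('x \<Rightarrow> 'x \<Rightarrow> 'x)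
    \<Rightarrow> ('k::field \<Rightarrow> 'x \<Rightarrow> 'x) \<Rightarrow> 'x set \<Rightarrow> bool" where
  "is_basis le add sm B \<longleftrightarrow> orderly_independent le add sm B \<and> generates le add sm B"

definition feasible :: "('x \<Rightarrow> 'x \<Rightarrow> bool) \<Rightarrow> ('x \<Rightarrow> 'x \<Rightarrow> 'x)
    \<Rightarrow> ('k::field \<Rightarrow> 'x \<Rightarrow> 'x) \<Rightarrow> 'x set" where
  "feasible le add sm = {x. x \<notin> primitive le \<and>
     {z. le z x} - primitive le \<subseteq> Lset le add sm x}"

end

theory Submission
  imports Defs
begin

text \<open>Orderly dependence, \<open>y \<in> L x\<close>, is a preorder on \<open>X \<setminus> X\<^sub>0\<close>, and on the feasible
 set \<open>Q(X)\<close> it is symmetric: if \<open>x \<ge> a y + p\<close> with \<open>x\<close> feasible, then \<open>a y + p\<close> lies in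
 \<open>L x\<close>, and \<open>y\<close> is recovered from \<open>a y + p\<close> by scaling with \<open>a\<^sup>-\<^sup>1\<close> and adding a primitive
 element. A basis element \<open>b\<close> is feasible, because every non-primitive \<open>w \<le> b\<close> lies in some
 \<open>L b'\<close>, which then also contains \<open>b\<close>, forcing \<open>b' = b\<close>; so if a basis exists, \<open>Q(X)\<close>
 generates. Conversely, if \<open>Q(X)\<close> generates, one representative from each class of
 mutually dependent feasible elements forms a basis.\<close>

locale exp_vector_space =
  fixes le :: "'x \<Rightarrow> 'x \<Rightarrow> bool" and add :: "'x \<Rightarrow> 'x \<Rightarrow> 'x" and th :: 'x
    and sm :: "'k::field \<Rightarrow> 'x \<Rightarrow> 'x"
  assumes evs: "evs le add th sm"
begin

abbreviation "X0 \<equiv> primitive le"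
abbreviation "L \<equiv> Lset le add sm"
abbreviation "Q \<equiv> feasible le add sm"

lemma le_refl: "le x x"
  using evs unfolding evs_def by (elim conjE) metis

lemma le_trans: "le x y \<Longrightarrow> le y z \<Longrightarrow> le x z"
  using evs unfolding evs_def by (elim conjE) metis

lemma add_assoc: "add (add x y) z = add x (add y z)"
  using evs unfolding evs_def by (elim conjE) metis

lemma add_commute: "add x y = add y x"
  using evs unfolding evs_def by (elim conjE) metis

lemma add_th: "add x th = x"
  using evs unfolding evs_def by (elim conjE) metis

lemma add_mono: "le x y \<Longrightarrow> le (add x z) (add y z)"
  using evs unfolding evs_def by (elim conjE) metis

lemma scale_mono: "le x y \<Longrightarrow> le (sm a x) (sm a y)"
  using evs unfolding evs_def by (elim conjE) metis

lemma scale_add: "sm a (add x y) = add (sm a x) (sm a y)"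
  using evs unfolding evs_def by (elim conjE) metis

lemma scale_scale: "sm a (sm b x) = sm (a * b) x"
  using evs unfolding evs_def by (elim conjE) metis

lemma scale_one: "sm 1 x = x"
  using evs unfolding evs_def by (elim conjE) metis

lemma scale_eq_th_iff: "sm a x = th \<longleftrightarrow> a = 0 \<or> x = th"
  using evs unfolding evs_def by (elim conjE) metis

lemma add_scale_minus_one_eq_th_iff: "add x (sm (-1) x) = th \<longleftrightarrow> x \<in> X0"
  using evs unfolding evs_def by (elim conjE) metis

lemma th_primitive: "th \<in> X0"
  using add_scale_minus_one_eq_th_iff[of th] scale_eq_th_iff[of "-1" th] add_th by simp

lemma primitive_add:
  assumes "p \<in> X0" "q \<in> X0"
  shows "add p q \<in> X0"
proof -
  have "add (add p q) (sm (-1) (add p q))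
      = add (add p (sm (-1) p)) (add q (sm (-1) q))"
    by (simp add: scale_add add_assoc) (metis add_assoc add_commute)
  also have "\<dots> = th"
    using assms add_scale_minus_one_eq_th_iff add_th by metis
  finally show ?thesis
    using add_scale_minus_one_eq_th_iff by blast
qed

lemma primitive_scale:
  assumes "p \<in> X0"
  shows "sm a p \<in> X0"
proof -
  have "add (sm a p) (sm (-1) (sm a p)) = sm a (add p (sm (-1) p))"
    by (simp add: scale_add scale_scale mult.commute)
  also have "\<dots> = th"
    using assms add_scale_minus_one_eq_th_iff scale_eq_th_iff by simp
  finally show ?thesis
    using add_scale_minus_one_eq_th_iff by blast
qed

lemma primitive_minimal: "p \<in> X0 \<Longrightarrow> le y p \<Longrightarrow> y = p"
  unfolding primitive_def by blast

lemma Lset_refl: "x \<in> L x"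
  unfolding Lset_def
  using th_primitive by (intro CollectI exI[of _ 1] exI[of _ th]) (simp add: scale_one add_th le_refl)

lemma Lset_upward: "z \<in> L x \<Longrightarrow> le z w \<Longrightarrow> w \<in> L x"
  unfolding Lset_def using le_trans by blast

lemma Lset_trans:
  assumes "y \<in> L x" "z \<in> L y"
  shows "z \<in> L x"
proof -
  obtain a p where a: "a \<noteq> 0" "p \<in> X0" "le (add (sm a x) p) y"
    using assms(1) unfolding Lset_def by blast
  obtain b q where b: "b \<noteq> 0" "q \<in> X0" "le (add (sm b y) q) z"
    using assms(2) unfolding Lset_def by blast
  have "le (add (sm b (add (sm a x) p)) q) (add (sm b y) q)"
    using a(3) by (intro add_mono scale_mono)
  then have "le (add (sm b (add (sm a x) p)) q) z"
    using b(3) by (rule le_trans)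
  then have "le (add (sm (b * a) x) (add (sm b p) q)) z"
    by (simp add: scale_add scale_scale add_assoc)
  moreover have "add (sm b p) q \<in> X0"
    using a b primitive_scale primitive_add by blast
  ultimately show ?thesis
    unfolding Lset_def using a b by (intro CollectI exI[of _ "b * a"]) auto
qed

lemma scale_add_cancel:
  assumes "a \<noteq> 0" "p \<in> X0"
  shows "add (sm (inverse a) (add (sm a y) p)) (sm (- inverse a) p) = y"
proof -
  have "sm (- inverse a) p = sm (-1) (sm (inverse a) p)"
    by (simp add: scale_scale)
  moreover have "add (sm (inverse a) p) (sm (-1) (sm (inverse a) p)) = th"
    using assms primitive_scale add_scale_minus_one_eq_th_iff by blast
  ultimately show ?thesis
    using assms by (simp add: scale_add scale_scale scale_one add_assoc add_th)
qed

lemma mem_Lset_scale_add: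
  assumes "a \<noteq> 0" "p \<in> X0"
  shows "y \<in> L (add (sm a y) p)"
  unfolding Lset_def
  using assms scale_add_cancel[OF assms, of y] primitive_scale[OF assms(2)] le_refl
  by (intro CollectI exI[of _ "inverse a"] exI[of _ "sm (- inverse a) p"]) simp

lemma primitive_of_scale_add:
  assumes "a \<noteq> 0" "p \<in> X0" "add (sm a y) p \<in> X0"
  shows "y \<in> X0"
  using scale_add_cancel[OF assms(1,2), of y] assms primitive_scale primitive_add by metis

lemma Lset_disjoint_primitive:
  assumes "x \<notin> X0" "z \<in> L x"
  shows "z \<notin> X0"
proof
  assume z: "z \<in> X0"
  obtain a p where a: "a \<noteq> 0" "p \<in> X0" "le (add (sm a x) p) z"
    using assms(2) unfolding Lset_def by blast
  then have "add (sm a x) p \<in> X0"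
    using primitive_minimal z by metis
  then show False
    using primitive_of_scale_add a assms(1) by blast
qed

lemma Union_Lset_subset_non_primitive: "S \<subseteq> - X0 \<Longrightarrow> (\<Union>b\<in>S. L b) \<subseteq> - X0"
  using Lset_disjoint_primitive by blast

lemma generates_superset:
  assumes "generates le add sm B" "B \<subseteq> S" "S \<subseteq> - X0"
  shows "generates le add sm S"
  using assms Union_Lset_subset_non_primitive[OF assms(3)] unfolding generates_def by blast

lemma feasible_dependent_sym:
  assumes "x \<in> Q" "y \<in> Q" "x \<in> L y"
  shows "y \<in> L x"
proof -
  obtain a p where a: "a \<noteq> 0" "p \<in> X0" "le (add (sm a y) p) x"
    using assms(3) unfolding Lset_def by blast
  have "add (sm a y) p \<notin> X0"
    using primitive_of_scale_add a assms(2) unfolding feasible_def by blast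
  then have "add (sm a y) p \<in> L x"
    using assms(1) a(3) unfolding feasible_def by blast
  then show ?thesis
    using mem_Lset_scale_add[OF a(1,2)] Lset_trans by blast
qed

lemma basis_subset_feasible:
  assumes "is_basis le add sm B"
  shows "B \<subseteq> Q"
proof
  fix b assume b: "b \<in> B"
  have "w \<in> L b" if "le w b" "w \<notin> X0" for w
  proof -
    obtain b' where b': "b' \<in> B" "w \<in> L b'"
      using assms \<open>w \<notin> X0\<close> unfolding is_basis_def generates_def by blast
    then have "b \<in> L b'"
      using Lset_upward \<open>le w b\<close> by blast
    then have "b' = b"
      using assms b b' unfolding is_basis_def orderly_independent_def by blast
    then show ?thesis
      using b' by simp
  qed
  moreover have "b \<notin> X0"
    using assms b unfolding is_basis_def generates_def by blast
  ultimately show "b \<in> Q"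
    unfolding feasible_def by blast
qed

lemma generating_feasible_subset_contains_basis:
  assumes S: "S \<subseteq> Q" and gen_S: "generates le add sm S"
  shows "\<exists>B \<subseteq> S. is_basis le add sm B"
proof -
  define cls where "cls q = {r \<in> S. r \<in> L q \<and> q \<in> L r}" for q
  define rep where "rep q = (SOME r. r \<in> cls q)" for q
  have rep: "rep q \<in> cls q" if "q \<in> S" for q
    unfolding rep_def by (rule someI[of _ q]) (simp add: cls_def that Lset_refl)
  define B where "B = rep ` S"
  have "B \<subseteq> S"
    using rep unfolding B_def cls_def by blast
  have "S \<subseteq> - X0"
    using S unfolding feasible_def by blast
  have "generates le add sm B"
    unfolding generates_def
  proof (intro conjI equalityI)
    show "B \<subseteq> - X0"
      using \<open>B \<subseteq> S\<close> \<open>S \<subseteq> - X0\<close> by blast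
    then show "(\<Union>b\<in>B. L b) \<subseteq> - X0"
      by (rule Union_Lset_subset_non_primitive)
    show "- X0 \<subseteq> (\<Union>b\<in>B. L b)"
    proof
      fix z assume "z \<in> - X0"
      then obtain q where q: "q \<in> S" "z \<in> L q"
        using gen_S unfolding generates_def by blast
      then have "q \<in> L (rep q)" "rep q \<in> B"
        using rep[OF q(1)] unfolding cls_def B_def by auto
      then show "z \<in> (\<Union>b\<in>B. L b)"
        using q(2) Lset_trans by blast
    qed
  qed
  moreover have "x \<notin> L y" if "x \<in> B" "y \<in> B" "x \<noteq> y" for x y
  proof
    assume "x \<in> L y"
    obtain qx qy where q: "qx \<in> S" "qy \<in> S" "x = rep qx" "y = rep qy"
      using \<open>x \<in> B\<close> \<open>y \<in> B\<close> unfolding B_def by blast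
    have "y \<in> L x"
      using feasible_dependent_sym \<open>x \<in> L y\<close> that \<open>B \<subseteq> S\<close> S by blast
    then have "cls qx = cls qy"
      using rep[OF q(1)] rep[OF q(2)] \<open>x \<in> L y\<close> q(3,4)
      unfolding cls_def by (blast intro: Lset_trans)
    then show False
      using q(3,4) \<open>x \<noteq> y\<close> unfolding rep_def by simp
  qed
  ultimately have "is_basis le add sm B"
    unfolding is_basis_def orderly_independent_def generates_def by blast
  with \<open>B \<subseteq> S\<close> show ?thesis
    by blast
qed

end

theorem mainTheorem5:
  fixes le :: "'x \<Rightarrow> 'x \<Rightarrow> bool" and add :: "'x \<Rightarrow> 'x \<Rightarrow> 'x" and th :: 'x
    and sm :: "'k::field \<Rightarrow> 'x \<Rightarrow> 'x"
  assumes "evs le add th sm"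
  shows "(\<exists>B. is_basis le add sm B) \<longleftrightarrow> generates le add sm (feasible le add sm)"
proof -
  interpret exp_vector_space le add th sm
    using assms by unfold_locales
  have Q_non_primitive: "feasible le add sm \<subseteq> - primitive le"
    unfolding feasible_def by blast
  show ?thesis
  proof
    assume "\<exists>B. is_basis le add sm B"
    then obtain B where B: "is_basis le add sm B" ..
    show "generates le add sm (feasible le add sm)"
      using B basis_subset_feasible[OF B] Q_non_primitive
      unfolding is_basis_def by (blast intro: generates_superset)
  next
    assume "generates le add sm (feasible le add sm)"
    then show "\<exists>B. is_basis le add sm B"
      using generating_feasible_subset_contains_basis by blast
  qed
qed

end
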